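(* Let $\{(\mathcal{X}_l,\mathring{\mathcal{X}}_l,p_l)\}_{l\in\mathcal{I}}$ be $B$-$B$-bimodules with specified projections with reduced free product $(\mathcal{X},\mathring{\mathcal{X}},p)$, and for each $l$ let $S_l\subset\mathcal{A}_{l,\mathcal{F}}\cup\mathcal{A}_{l,\mathcal{B}}$. Let $i\ne j$ in $\mathcal{I}$, let $A_1\in\mathcal{A}_i$ be a simple product of elements from $S_i$ and $A_2\in\mathcal{A}_j$ a simple product of elements from $S_j$. If $A_1$ is a Boolean product, then $A_1A_2(1_B)=A_1\big(\mathbb{E}_{\mathcal{L}(\mathcal{X})}(A_2)\big)$, where $\mathbb{E}_{\mathcal{L}(\mathcal{X})}(A_2)\in B\subset\mathcal{X}$.
   Context: $B$ is a unital complex algebra. A $B$-$B$-bimodule with specified projection is a triple $(\mathcal{X},\mathring{\mathcal{X}},p)$ with $\mathcal{X}=B\oplus\mathring{\mathcal{X}}$ a direct sum of $B$-$B$-bimodules and $p(b\oplus\eta)=b$; $\mathcal{L}(\mathcal{X})$ is the algebra of linear operators on $\mathcal{X}$ respecting the bimodule structure and $\mathbb{E}_{\mathcal{L}(\mathcal{X})}(T)=p(T(1_B\oplus0))$. The reduced free product is $\mathcal{X}=B\oplus\mathring{\mathcal{X}}$ with $\mathring{\mathcal{X}}=\bigoplus_{n\ge1}\bigoplus_{i_1\ne\cdots\ne i_n}\mathring{\mathcal{X}}_{i_1}\otimes_B\cdots\otimes_B\mathring{\mathcal{X}}_{i_n}$ (consecutive indices distinct), $p$ the projection onto $B$. For $l\in\mathcal{I}$,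 $\mathcal{X}(l)=B\oplus\bigoplus_{n\ge1}\bigoplus_{i_1\ne\cdots\ne i_n,\ i_1\ne l}\mathring{\mathcal{X}}_{i_1}\otimes_B\cdots\otimes_B\mathring{\mathcal{X}}_{i_n}$, $V_l:\mathcal{X}\to\mathcal{X}_l\otimes_B\mathcal{X}(l)$ is the natural isomorphism, $\lambda_l(a)=V_l^{-1}(a\otimes I)V_l$, $P_l$ the projection onto the summand $B\oplus\mathring{\mathcal{X}}_l$ (zero on other summands), $\mathcal{A}_{l,\mathcal{F}}=\lambda_l(\mathcal{L}(\mathcal{X}_l))$, $\mathcal{A}_{l,\mathcal{B}}=P_l\lambda_l(\mathcal{L}(\mathcal{X}_l))P_l$, $\mathcal{A}_l$ the algebra generated by both. A product $a_1\cdots a_m$ with all $a_k\in S_l$ is a simple product of elements from $S_l$; it is a Boolean product if some $a_k\in S_l\cap\mathcal{A}_{l,\mathcal{B}}$. *)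

theory Defs
  imports Complex_Main
begin

class cplx_algebra_1 = ring_1 +
  fixes scaleC :: "complex \<Rightarrow> 'a \<Rightarrow> 'a"
  assumes scaleC_add_right: "scaleC a (x + y) = scaleC a x + scaleC a y"
    and scaleC_add_left: "scaleC (a + b) x = scaleC a x + scaleC b x"
    and scaleC_scaleC: "scaleC a (scaleC b x) = scaleC (a * b) x"
    and scaleC_one: "scaleC 1 x = x"
    and scaleC_mult_left: "scaleC a x * y = scaleC a (x * y)"
    and scaleC_mult_right: "x * scaleC a y = scaleC a (x * y)"

record ('b, 'x) bimod =
  bcarr :: "'x set"
  badd :: "'x \<Rightarrow> 'x \<Rightarrow> 'x"
  bzero :: "'x"
  bneg :: "'x \<Rightarrow> 'x"
  blact :: "'b \<Rightarrow> 'x \<Rightarrow> 'x"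
  bract :: "'x \<Rightarrow> 'b \<Rightarrow> 'x"

definition bimodule :: "('b::ring_1, 'x) bimod \<Rightarrow> bool" where
  "bimodule M \<longleftrightarrow>
     bzero M \<in> bcarr M \<and>
     (\<forall>x\<in>bcarr M. \<forall>y\<in>bcarr M. badd M x y \<in> bcarr M) \<and>
     (\<forall>x\<in>bcarr M. bneg M x \<in> bcarr M) \<and>
     (\<forall>b. \<forall>x\<in>bcarr M. blact M b x \<in> bcarr M \<and> bract M x b \<in> bcarr M) \<and>
     (\<forall>x\<in>bcarr M. \<forall>y\<in>bcarr M. \<forall>z\<in>bcarr M.
        badd M (badd M x y) z = badd M x (badd M y z)) \<and>
     (\<forall>x\<in>bcarr M. \<forall>y\<in>bcarr M. badd M x y = badd M y x) \<and>
     (\<forall>x\<in>bcarr M. badd M (bzero M) x = x) \<and>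
     (\<forall>x\<in>bcarr M. badd M (bneg M x) x = bzero M) \<and>
     (\<forall>x\<in>bcarr M. blact M 1 x = x \<and> bract M x 1 = x) \<and>
     (\<forall>a b. \<forall>x\<in>bcarr M. blact M (a * b) x = blact M a (blact M b x)) \<and>
     (\<forall>a b. \<forall>x\<in>bcarr M. bract M x (a * b) = bract M (bract M x a) b) \<and>
     (\<forall>a b. \<forall>x\<in>bcarr M. bract M (blact M a x) b = blact M a (bract M x b)) \<and>
     (\<forall>a. \<forall>x\<in>bcarr M. \<forall>y\<in>bcarr M.
        blact M a (badd M x y) = badd M (blact M a x) (blact M a y) \<and>
        bract M (badd M x y) a = badd M (bract M x a) (bract M y a)) \<and>
     (\<forall>a b. \<forall>x\<in>bcarr M.
        blact M (a + b) x = badd M (blact M a x) (blact M b x) \<and>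
        bract M x (a + b) = badd M (bract M x a) (bract M x b))"

section \<open>The components X_l = B \<oplus> X_l-ring, and L(X_l)\<close>

definition comp_carr :: "'i \<Rightarrow> ('i \<Rightarrow> ('b, 'x) bimod) \<Rightarrow> ('b \<times> 'x) set" where
  "comp_carr l M = UNIV \<times> bcarr (M l)"

definition comp_add :: "'i \<Rightarrow> ('i \<Rightarrow> ('b::ring_1, 'x) bimod) \<Rightarrow> 'b \<times> 'x \<Rightarrow> 'b \<times> 'x \<Rightarrow> 'b \<times> 'x" where
  "comp_add l M u v = (fst u + fst v, badd (M l) (snd u) (snd v))"

definition comp_lact :: "'i \<Rightarrow> ('i \<Rightarrow> ('b::ring_1, 'x) bimod) \<Rightarrow> 'b \<Rightarrow> 'b \<times> 'x \<Rightarrow> 'b \<times> 'x" where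
  "comp_lact l M b u = (b * fst u, blact (M l) b (snd u))"

definition comp_ract :: "'i \<Rightarrow> ('i \<Rightarrow> ('b::ring_1, 'x) bimod) \<Rightarrow> 'b \<Rightarrow> 'b \<times> 'x \<Rightarrow> 'b \<times> 'x" where
  "comp_ract l M b u = (fst u * b, bract (M l) (snd u) b)"

definition Lcomp :: "('i \<Rightarrow> ('b::ring_1, 'x) bimod) \<Rightarrow> 'i \<Rightarrow> ('b \<times> 'x \<Rightarrow> 'b \<times> 'x) set" where
  "Lcomp M l = {a. \<forall>u\<in>comp_carr l M.
      a u \<in> comp_carr l M \<and>
      (\<forall>v\<in>comp_carr l M. a (comp_add l M u v) = comp_add l M (a u) (a v)) \<and>
      (\<forall>b. a (comp_lact l M b u) = comp_lact l M b (a u) \<and>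
           a (comp_ract l M b u) = comp_ract l M b (a u))}"

section \<open>The reduced free product X = B \<oplus> (alternating tensor words)\<close>

text \<open>A generator (b, [(i1,x1),...,(in,xn)]) stands for the elementary tensor
  b x1 \<otimes>_B ... \<otimes>_B xn in X_i1-ring \<otimes>_B ... \<otimes>_B X_in-ring; for n = 0 it is b \<in> B.\<close>

type_synonym ('b, 'i, 'x) fpgen = "'b \<times> ('i \<times> 'x) list"
type_synonym ('b, 'i, 'x) fpvec = "('b, 'i, 'x) fpgen \<Rightarrow> int"
type_synonym ('b, 'i, 'x) fpelt = "('b, 'i, 'x) fpvec set"

definition valid_word :: "('i \<Rightarrow> ('b, 'x) bimod) \<Rightarrow> ('i \<times> 'x) list \<Rightarrow> bool" where
  "valid_word M w \<longleftrightarrow> (\<forall>p\<in>set w. snd p \<in> bcarr (M (fst p))) \<and> successively (\<noteq>) (map fst w)"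

definition fp_free :: "('i \<Rightarrow> ('b, 'x) bimod) \<Rightarrow> ('b, 'i, 'x) fpvec set" where
  "fp_free M = {g. finite {k. g k \<noteq> 0} \<and> (\<forall>k. g k \<noteq> 0 \<longrightarrow> valid_word M (snd k))}"

definition gen :: "('b, 'i, 'x) fpgen \<Rightarrow> ('b, 'i, 'x) fpvec" where
  "gen k = (\<lambda>k'. if k' = k then 1 else 0)"

text \<open>The subgroup of relations defining the (multiple) tensor products over B.\<close>
inductive_set fp_rel :: "('i \<Rightarrow> ('b::ring_1, 'x) bimod) \<Rightarrow> ('b, 'i, 'x) fpvec set"
  for M :: "'i \<Rightarrow> ('b::ring_1, 'x) bimod" where
  rel_zero: "(\<lambda>_. 0) \<in> fp_rel M"
| rel_addb: "valid_word M w \<Longrightarrow>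
     (\<lambda>k. gen (b1 + b2, w) k - gen (b1, w) k - gen (b2, w) k) \<in> fp_rel M"
| rel_addx: "valid_word M (w1 @ (i, x) # w2) \<Longrightarrow> y \<in> bcarr (M i) \<Longrightarrow>
     (\<lambda>k. gen (b, w1 @ (i, badd (M i) x y) # w2) k - gen (b, w1 @ (i, x) # w2) k
          - gen (b, w1 @ (i, y) # w2) k) \<in> fp_rel M"
| rel_bal: "valid_word M (w1 @ (i, x) # (j, y) # w2) \<Longrightarrow>
     (\<lambda>k. gen (b, w1 @ (i, bract (M i) x c) # (j, y) # w2) k
          - gen (b, w1 @ (i, x) # (j, blact (M j) c y) # w2) k) \<in> fp_rel M"
| rel_first: "valid_word M ((i, x) # w) \<Longrightarrow>
     (\<lambda>k. gen (b * c, (i, x) # w) k - gen (b, (i, blact (M i) c x) # w) k) \<in> fp_rel M"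
| rel_plus: "g \<in> fp_rel M \<Longrightarrow> h \<in> fp_rel M \<Longrightarrow> (\<lambda>k. g k + h k) \<in> fp_rel M"
| rel_neg: "g \<in> fp_rel M \<Longrightarrow> (\<lambda>k. - g k) \<in> fp_rel M"

definition cls :: "('i \<Rightarrow> ('b::ring_1, 'x) bimod) \<Rightarrow> ('b, 'i, 'x) fpvec \<Rightarrow> ('b, 'i, 'x) fpelt" where
  "cls M g = {(\<lambda>k. g k + r k) | r. r \<in> fp_rel M}"

definition fp_carrier :: "('i \<Rightarrow> ('b::ring_1, 'x) bimod) \<Rightarrow> ('b, 'i, 'x) fpelt set" where
  "fp_carrier M = cls M ` fp_free M"

definition rep :: "('i \<Rightarrow> ('b::ring_1, 'x) bimod) \<Rightarrow> ('b, 'i, 'x) fpelt \<Rightarrow> ('b, 'i, 'x) fpvec" where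
  "rep M C = (SOME g. g \<in> fp_free M \<and> cls M g = C)"

definition ext :: "(('b, 'i, 'x) fpgen \<Rightarrow> ('b, 'i, 'x) fpvec) \<Rightarrow> ('b, 'i, 'x) fpvec \<Rightarrow> ('b, 'i, 'x) fpvec" where
  "ext \<phi> g = (\<lambda>k'. \<Sum>k\<in>{k. g k \<noteq> 0}. g k * \<phi> k k')"

definition lift :: "('i \<Rightarrow> ('b::ring_1, 'x) bimod) \<Rightarrow> (('b, 'i, 'x) fpgen \<Rightarrow> ('b, 'i, 'x) fpvec)
    \<Rightarrow> ('b, 'i, 'x) fpelt \<Rightarrow> ('b, 'i, 'x) fpelt" where
  "lift M \<phi> C = cls M (ext \<phi> (rep M C))"

definition fp_add :: "('i \<Rightarrow> ('b::ring_1, 'x) bimod) \<Rightarrow> ('b, 'i, 'x) fpelt \<Rightarrow> ('b, 'i, 'x) fpelt \<Rightarrow> ('b, 'i, 'x) fpelt" where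
  "fp_add M C D = cls M (\<lambda>k. rep M C k + rep M D k)"

definition fp_lact :: "('i \<Rightarrow> ('b::ring_1, 'x) bimod) \<Rightarrow> 'b \<Rightarrow> ('b, 'i, 'x) fpelt \<Rightarrow> ('b, 'i, 'x) fpelt" where
  "fp_lact M b = lift M (\<lambda>(c, w). gen (b * c, w))"

definition fp_ract :: "('i \<Rightarrow> ('b::ring_1, 'x) bimod) \<Rightarrow> 'b \<Rightarrow> ('b, 'i, 'x) fpelt \<Rightarrow> ('b, 'i, 'x) fpelt" where
  "fp_ract M b = lift M (\<lambda>(c, w). if w = [] then gen (c * b, [])
      else gen (c, butlast w @ [(fst (last w), bract (M (fst (last w))) (snd (last w)) b)]))"

definition fp_emb :: "('i \<Rightarrow> ('b::ring_1, 'x) bimod) \<Rightarrow> 'b \<Rightarrow> ('b, 'i, 'x) fpelt" where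
  "fp_emb M b = cls M (gen (b, []))"

definition fp_one :: "('i \<Rightarrow> ('b::ring_1, 'x) bimod) \<Rightarrow> ('b, 'i, 'x) fpelt" where
  "fp_one M = fp_emb M 1"

definition fp_proj :: "('i \<Rightarrow> ('b::ring_1, 'x) bimod) \<Rightarrow> ('b, 'i, 'x) fpelt \<Rightarrow> 'b" where
  "fp_proj M C = (\<Sum>k\<in>{k. rep M C k \<noteq> 0 \<and> snd k = []}. of_int (rep M C k) * fst k)"

definition Lfp :: "('i \<Rightarrow> ('b::ring_1, 'x) bimod) \<Rightarrow> (('b, 'i, 'x) fpelt \<Rightarrow> ('b, 'i, 'x) fpelt) set" where
  "Lfp M = {T. \<forall>C\<in>fp_carrier M.
      T C \<in> fp_carrier M \<and>
      (\<forall>D\<in>fp_carrier M. T (fp_add M C D) = fp_add M (T C) (T D)) \<and>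
      (\<forall>b. T (fp_lact M b C) = fp_lact M b (T C) \<and> T (fp_ract M b C) = fp_ract M b (T C))}"

definition fp_E :: "('i \<Rightarrow> ('b::ring_1, 'x) bimod) \<Rightarrow> (('b, 'i, 'x) fpelt \<Rightarrow> ('b, 'i, 'x) fpelt) \<Rightarrow> 'b" where
  "fp_E M T = fp_proj M (T (fp_one M))"

text \<open>lambda_l(a) = V_l^{-1} (a \<otimes> I) V_l, written out on elementary tensors:
  if the word starts with a letter from X_l-ring, say b x1 \<otimes> \<zeta>, then
  V_l maps it to (0 \<oplus> b x1) \<otimes> \<zeta>; otherwise b \<zeta> is mapped to (b \<oplus> 0) \<otimes> \<zeta>.
  Then a(...) = c \<oplus> \<eta> and the result is c \<zeta> + \<eta> \<otimes> \<zeta>.\<close>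
definition lam :: "('i \<Rightarrow> ('b::ring_1, 'x) bimod) \<Rightarrow> 'i \<Rightarrow> ('b \<times> 'x \<Rightarrow> 'b \<times> 'x)
    \<Rightarrow> ('b, 'i, 'x) fpelt \<Rightarrow> ('b, 'i, 'x) fpelt" where
  "lam M l a = lift M (\<lambda>(b, w).
     if w \<noteq> [] \<and> fst (hd w) = l
     then (let u = a (0, blact (M l) b (snd (hd w)))
           in (\<lambda>k. gen (fst u, tl w) k + gen (1, (l, snd u) # tl w) k))
     else (let u = a (b, bzero (M l))
           in (\<lambda>k. gen (fst u, w) k + gen (1, (l, snd u) # w) k)))"

definition Pproj :: "('i \<Rightarrow> ('b::ring_1, 'x) bimod) \<Rightarrow> 'i \<Rightarrow> ('b, 'i, 'x) fpelt \<Rightarrow> ('b, 'i, 'x) fpelt" where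
  "Pproj M l = lift M (\<lambda>(b, w). if w = [] \<or> (\<exists>x. w = [(l, x)]) then gen (b, w) else (\<lambda>_. 0))"

definition AF :: "('i \<Rightarrow> ('b::ring_1, 'x) bimod) \<Rightarrow> 'i \<Rightarrow> (('b, 'i, 'x) fpelt \<Rightarrow> ('b, 'i, 'x) fpelt) set" where
  "AF M l = lam M l ` Lcomp M l"

definition AB :: "('i \<Rightarrow> ('b::ring_1, 'x) bimod) \<Rightarrow> 'i \<Rightarrow> (('b, 'i, 'x) fpelt \<Rightarrow> ('b, 'i, 'x) fpelt) set" where
  "AB M l = (\<lambda>a. Pproj M l \<circ> lam M l a \<circ> Pproj M l) ` Lcomp M l"

definition prodop :: "('a \<Rightarrow> 'a) list \<Rightarrow> 'a \<Rightarrow> 'a" where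
  "prodop as = foldr (\<circ>) as id"

end

theory Submission
  imports Defs
begin

text \<open>An element of X is the class of a finite integer combination of elementary tensors, and
  lambda_l(a) and P_l are induced by maps on elementary tensors that respect the defining
  relations. Hence every product of operators from A_l acts through an additive map on
  such combinations, and it suffices to track supports. Operators from A_j keep
  B \<oplus> X_j-ring invariant, so A_2(1_B) = E(A_2) + \<eta> with \<eta> in X_j-ring. For i \<noteq> j,
  lambda_i(a) maps a word containing a letter other than i to words that still contain one,
  while P_i annihilates all such words; so a product with a Boolean factor P_i lambda_i(a) P_i
  kills \<eta>, which gives A_1 A_2(1_B) = A_1(E(A_2)).\<close>

section \<open>Finitely supported integer combinations\<close>

definition fin_supp :: "('k \<Rightarrow> int) \<Rightarrow> bool" where
  "fin_supp g \<longleftrightarrow> finite {k. g k \<noteq> 0}"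

definition supp_sum :: "('k \<Rightarrow> 'a::ring_1) \<Rightarrow> ('k \<Rightarrow> int) \<Rightarrow> 'a" where
  "supp_sum f g = (\<Sum>k\<in>{k. g k \<noteq> 0}. of_int (g k) * f k)"

lemma fin_supp_gen [simp]: "fin_supp (gen x)"
  unfolding fin_supp_def gen_def by simp

lemma fin_supp_zero [simp]: "fin_supp (\<lambda>_. 0)"
  unfolding fin_supp_def by simp

lemma fin_supp_add [simp]: "fin_supp g \<Longrightarrow> fin_supp h \<Longrightarrow> fin_supp (\<lambda>k. g k + h k)"
  unfolding fin_supp_def by (rule finite_subset[of _ "{k. g k \<noteq> 0} \<union> {k. h k \<noteq> 0}"]) auto

lemma fin_supp_diff [simp]: "fin_supp g \<Longrightarrow> fin_supp h \<Longrightarrow> fin_supp (\<lambda>k. g k - h k)"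
  unfolding fin_supp_def by (rule finite_subset[of _ "{k. g k \<noteq> 0} \<union> {k. h k \<noteq> 0}"]) auto

lemma fin_supp_neg [simp]: "fin_supp g \<Longrightarrow> fin_supp (\<lambda>k. - g k)"
  unfolding fin_supp_def by simp

lemma supp_sum_superset:
  assumes "finite F" "{k. g k \<noteq> 0} \<subseteq> F"
  shows "supp_sum f g = (\<Sum>k\<in>F. of_int (g k) * f k)"
  unfolding supp_sum_def using assms by (intro sum.mono_neutral_left) auto

lemma supp_sum_add:
  assumes "fin_supp g" "fin_supp h"
  shows "supp_sum f (\<lambda>k. g k + h k) = supp_sum f g + supp_sum f h"
proof -
  let ?F = "{k. g k \<noteq> 0} \<union> {k. h k \<noteq> 0}"
  have "finite ?F" using assms by (simp add: fin_supp_def)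
  then show ?thesis
    by (subst (1 2 3) supp_sum_superset[of ?F]) (auto simp: distrib_right sum.distrib)
qed

lemma supp_sum_neg:
  assumes "fin_supp g"
  shows "supp_sum f (\<lambda>k. - g k) = - supp_sum f g"
  using assms by (simp add: supp_sum_def sum_negf)

lemma supp_sum_diff:
  assumes "fin_supp g" "fin_supp h"
  shows "supp_sum f (\<lambda>k. g k - h k) = supp_sum f g - supp_sum f h"
  using supp_sum_add[of g "\<lambda>k. - h k" f] supp_sum_neg[of h f] assms by simp

lemma supp_sum_gen [simp]: "supp_sum f (gen x) = f x"
  by (subst supp_sum_superset[of "{x}"]) (auto simp: gen_def)

lemma supp_sum_zero [simp]: "supp_sum f (\<lambda>_. 0) = 0"
  unfolding supp_sum_def by simp

lemma ext_supp_sum: "ext \<phi> g = (\<lambda>k'. supp_sum (\<lambda>k. \<phi> k k') g)"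
  unfolding ext_def supp_sum_def by simp

lemma ext_add:
  "fin_supp g \<Longrightarrow> fin_supp h \<Longrightarrow> ext \<phi> (\<lambda>k. g k + h k) = (\<lambda>k'. ext \<phi> g k' + ext \<phi> h k')"
  by (simp add: ext_supp_sum supp_sum_add)

lemma ext_diff:
  "fin_supp g \<Longrightarrow> fin_supp h \<Longrightarrow> ext \<phi> (\<lambda>k. g k - h k) = (\<lambda>k'. ext \<phi> g k' - ext \<phi> h k')"
  by (simp add: ext_supp_sum supp_sum_diff)

lemma ext_neg: "fin_supp g \<Longrightarrow> ext \<phi> (\<lambda>k. - g k) = (\<lambda>k'. - ext \<phi> g k')"
  by (simp add: ext_supp_sum supp_sum_neg)

lemma ext_gen [simp]: "ext \<phi> (gen x) = \<phi> x"
  by (simp add: ext_supp_sum)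

lemma ext_zero [simp]: "ext \<phi> (\<lambda>_. 0) = (\<lambda>_. 0)"
  by (simp add: ext_supp_sum)

lemma ext_nonzeroE:
  assumes "ext \<phi> g k' \<noteq> 0"
  obtains k where "g k \<noteq> 0" "\<phi> k k' \<noteq> 0"
  using assms unfolding ext_def by (metis (mono_tags, lifting) mem_Collect_eq mult_zero_right sum.neutral)

lemma fin_supp_ext:
  assumes "fin_supp g" "\<And>k. fin_supp (\<phi> k)"
  shows "fin_supp (ext \<phi> g)"
proof -
  have "{k'. ext \<phi> g k' \<noteq> 0} \<subseteq> (\<Union>k\<in>{k. g k \<noteq> 0}. {k'. \<phi> k k' \<noteq> 0})"
    by (auto elim: ext_nonzeroE)
  then show ?thesis
    using assms unfolding fin_supp_def by (meson finite_UN_I finite_subset)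
qed

section \<open>Generator maps that descend to the free product\<close>

lemma fp_rel_fin_supp: "r \<in> fp_rel M \<Longrightarrow> fin_supp r"
  by (induction rule: fp_rel.induct) auto

lemma fp_rel_diff: "g \<in> fp_rel M \<Longrightarrow> h \<in> fp_rel M \<Longrightarrow> (\<lambda>k. g k - h k) \<in> fp_rel M"
  using fp_rel.rel_plus[OF _ fp_rel.rel_neg, of g M h] by simp

lemma fp_rel_sumI:
  "g \<in> fp_rel M \<Longrightarrow> h \<in> fp_rel M \<Longrightarrow> (\<And>k. f k = g k + h k) \<Longrightarrow> f \<in> fp_rel M"
  using fp_rel.rel_plus[of g M h] by (metis (no_types, lifting) ext)

lemma cls_eq_iff: "cls M g = cls M h \<longleftrightarrow> (\<lambda>k. g k - h k) \<in> fp_rel M"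
proof
  assume "cls M g = cls M h"
  moreover have "h \<in> cls M h"
    unfolding cls_def using fp_rel.rel_zero by force
  ultimately obtain r where "r \<in> fp_rel M" "h = (\<lambda>k. g k + r k)"
    by (auto simp: cls_def)
  then show "(\<lambda>k. g k - h k) \<in> fp_rel M"
    using fp_rel.rel_neg[of r M] by simp
next
  have sub: "cls M g \<subseteq> cls M h" if d: "(\<lambda>k. g k - h k) \<in> fp_rel M" for g h
  proof
    fix x assume "x \<in> cls M g"
    then obtain r where "r \<in> fp_rel M" "x = (\<lambda>k. g k + r k)"
      by (auto simp: cls_def)
    then show "x \<in> cls M h"
      unfolding cls_def using fp_rel.rel_plus[OF d] by force
  qed
  assume "(\<lambda>k. g k - h k) \<in> fp_rel M"
  moreover from fp_rel.rel_neg[OF this] have "(\<lambda>k. h k - g k) \<in> fp_rel M"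
    by simp
  ultimately show "cls M g = cls M h"
    using sub by blast
qed

definition supp_in :: "('k \<Rightarrow> int) \<Rightarrow> ('k \<Rightarrow> bool) \<Rightarrow> bool" where
  "supp_in g P \<longleftrightarrow> (\<forall>k. g k \<noteq> 0 \<longrightarrow> P k)"

definition preserves :: "('k \<Rightarrow> 'k \<Rightarrow> int) \<Rightarrow> ('k \<Rightarrow> bool) \<Rightarrow> bool" where
  "preserves \<phi> P \<longleftrightarrow> (\<forall>k k'. P k \<longrightarrow> \<phi> k k' \<noteq> 0 \<longrightarrow> P k')"

lemma supp_in_ext: "supp_in g P \<Longrightarrow> preserves \<phi> P \<Longrightarrow> supp_in (ext \<phi> g) P"
  unfolding supp_in_def preserves_def by (metis ext_nonzeroE)

lemma fp_free_iff: "g \<in> fp_free M \<longleftrightarrow> fin_supp g \<and> supp_in g (\<lambda>k. valid_word M (snd k))"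
  unfolding fp_free_def fin_supp_def supp_in_def by auto

lemma fp_free_restrict: "g \<in> fp_free M \<Longrightarrow> (\<lambda>k. if P k then g k else 0) \<in> fp_free M"
  unfolding fp_free_def by (auto elim: rev_finite_subset)

lemma rep_cls:
  assumes "g \<in> fp_free M"
  shows "rep M (cls M g) \<in> fp_free M" "cls M (rep M (cls M g)) = cls M g"
  using someI[of "\<lambda>h. h \<in> fp_free M \<and> cls M h = cls M g" g] assms by (auto simp: rep_def)

definition descends :: "('i \<Rightarrow> ('b::ring_1, 'x) bimod) \<Rightarrow> (('b, 'i, 'x) fpgen \<Rightarrow> ('b, 'i, 'x) fpvec) \<Rightarrow> bool" where
  "descends M \<phi> \<longleftrightarrow> (\<forall>k. fin_supp (\<phi> k)) \<and> preserves \<phi> (\<lambda>k. valid_word M (snd k)) \<and>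
     (\<forall>r\<in>fp_rel M. ext \<phi> r \<in> fp_rel M)"

lemma descendsI:
  assumes "\<And>k. fin_supp (\<phi> k)" and "preserves \<phi> (\<lambda>k. valid_word M (snd k))"
    and addb: "\<And>w b1 b2. valid_word M w \<Longrightarrow>
      (\<lambda>k. \<phi> (b1 + b2, w) k - \<phi> (b1, w) k - \<phi> (b2, w) k) \<in> fp_rel M"
    and addx: "\<And>w1 i x w2 y b. valid_word M (w1 @ (i, x) # w2) \<Longrightarrow> y \<in> bcarr (M i) \<Longrightarrow>
      (\<lambda>k. \<phi> (b, w1 @ (i, badd (M i) x y) # w2) k - \<phi> (b, w1 @ (i, x) # w2) k
           - \<phi> (b, w1 @ (i, y) # w2) k) \<in> fp_rel M"
    and bal: "\<And>w1 i x j y w2 b c. valid_word M (w1 @ (i, x) # (j, y) # w2) \<Longrightarrow>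
      (\<lambda>k. \<phi> (b, w1 @ (i, bract (M i) x c) # (j, y) # w2) k
           - \<phi> (b, w1 @ (i, x) # (j, blact (M j) c y) # w2) k) \<in> fp_rel M"
    and first: "\<And>i x w b c. valid_word M ((i, x) # w) \<Longrightarrow>
      (\<lambda>k. \<phi> (b * c, (i, x) # w) k - \<phi> (b, (i, blact (M i) c x) # w) k) \<in> fp_rel M"
  shows "descends M \<phi>"
proof -
  have "ext \<phi> r \<in> fp_rel M" if "r \<in> fp_rel M" for r
    using that
  proof (induction rule: fp_rel.induct)
    case (rel_plus g h)
    then show ?case
      by (simp add: ext_add fp_rel_fin_supp fp_rel.rel_plus)
  next
    case (rel_neg g)
    then show ?case
      by (simp add: ext_neg fp_rel_fin_supp fp_rel.rel_neg)
  qed (simp_all add: ext_diff fp_rel.rel_zero addb addx bal first)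
  with assms(1,2) show ?thesis
    by (simp add: descends_def)
qed

lemma descends_fp_free: "descends M \<phi> \<Longrightarrow> g \<in> fp_free M \<Longrightarrow> ext \<phi> g \<in> fp_free M"
  by (auto simp: descends_def fp_free_iff intro: fin_supp_ext supp_in_ext)

lemma lift_cls:
  assumes \<phi>: "descends M \<phi>" and g: "g \<in> fp_free M"
  shows "lift M \<phi> (cls M g) = cls M (ext \<phi> g)"
proof -
  let ?g = "rep M (cls M g)"
  have "(\<lambda>k. ?g k - g k) \<in> fp_rel M"
    using rep_cls[OF g] cls_eq_iff by blast
  then have "ext \<phi> (\<lambda>k. ?g k - g k) \<in> fp_rel M"
    using \<phi> by (simp add: descends_def)
  moreover have "fin_supp ?g" "fin_supp g"
    using rep_cls(1)[OF g] g by (simp_all add: fp_free_iff)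
  ultimately show ?thesis
    unfolding lift_def cls_eq_iff by (simp add: ext_diff)
qed

lemma valid_word_Nil [simp]: "valid_word M []"
  by (simp add: valid_word_def)

lemma valid_word_Cons:
  "valid_word M (p # w) \<longleftrightarrow>
     snd p \<in> bcarr (M (fst p)) \<and> valid_word M w \<and> (w = [] \<or> fst p \<noteq> fst (hd w))"
  by (cases w) (auto simp: valid_word_def successively_Cons)

lemma bimodule_facts:
  assumes "bimodule L"
  shows bimodule_zero_closed: "bzero L \<in> bcarr L"
    and bimodule_lact_closed: "x \<in> bcarr L \<Longrightarrow> blact L b x \<in> bcarr L"
    and bimodule_zero_add: "x \<in> bcarr L \<Longrightarrow> badd L (bzero L) x = x"
    and bimodule_lact_scalar_add:
      "x \<in> bcarr L \<Longrightarrow> blact L (a + b) x = badd L (blact L a x) (blact L b x)"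
    and bimodule_lact_add:
      "x \<in> bcarr L \<Longrightarrow> y \<in> bcarr L \<Longrightarrow> blact L a (badd L x y) = badd L (blact L a x) (blact L a y)"
    and bimodule_lact_mult: "x \<in> bcarr L \<Longrightarrow> blact L (a * b) x = blact L a (blact L b x)"
    and bimodule_lact_ract: "x \<in> bcarr L \<Longrightarrow> blact L a (bract L x b) = bract L (blact L a x) b"
  using assms unfolding bimodule_def by metis+

lemma bimodule_ract_zero:
  assumes L: "bimodule L"
  shows "bract L (bzero L) c = bzero L"
proof -
  let ?z = "bract L (bzero L) c" and ?n = "bneg L (bract L (bzero L) c)"
  have z: "?z \<in> bcarr L" "?n \<in> bcarr L" "?z = badd L ?z ?z"
    using L bimodule_zero_closed[OF L] unfolding bimodule_def by metis+
  have "bzero L = badd L ?n ?z"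
    using L z unfolding bimodule_def by metis
  also have "\<dots> = badd L ?n (badd L ?z ?z)"
    using z(3) by simp
  also have "\<dots> = badd L (badd L ?n ?z) ?z"
    using L z unfolding bimodule_def by metis
  also have "\<dots> = ?z"
    using L z unfolding bimodule_def by metis
  finally show ?thesis ..
qed

lemma Lcomp_closed: "a \<in> Lcomp M l \<Longrightarrow> s \<in> bcarr (M l) \<Longrightarrow> snd (a (b, s)) \<in> bcarr (M l)"
  unfolding Lcomp_def comp_carr_def by (force simp: mem_Times_iff)

lemma Lcomp_add:
  "a \<in> Lcomp M l \<Longrightarrow> s \<in> bcarr (M l) \<Longrightarrow> t \<in> bcarr (M l) \<Longrightarrow>
   a (b + c, badd (M l) s t) =
     (fst (a (b, s)) + fst (a (c, t)), badd (M l) (snd (a (b, s))) (snd (a (c, t))))"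
  unfolding Lcomp_def comp_carr_def comp_add_def by auto

lemma Lcomp_ract:
  "a \<in> Lcomp M l \<Longrightarrow> s \<in> bcarr (M l) \<Longrightarrow>
   a (b * c, bract (M l) s c) = (fst (a (b, s)) * c, bract (M l) (snd (a (b, s))) c)"
  unfolding Lcomp_def comp_carr_def comp_ract_def by auto

text \<open>The image V_l^{-1}((c \<oplus> \<eta>) \<otimes> \<zeta>) = c \<zeta> + \<eta> \<otimes> \<zeta>, for u = (c, \<eta>) and the word r representing \<zeta>.\<close>
definition V_inv :: "'i \<Rightarrow> 'b::ring_1 \<times> 'x \<Rightarrow> ('i \<times> 'x) list \<Rightarrow> ('b, 'i, 'x) fpvec" where
  "V_inv l u r = (\<lambda>k. gen (fst u, r) k + gen (1, (l, snd u) # r) k)"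

lemma fin_supp_V_inv [simp]: "fin_supp (V_inv l u r)"
  unfolding V_inv_def by simp

lemma V_inv_nonzeroD: "V_inv l u r k \<noteq> 0 \<Longrightarrow> k = (fst u, r) \<or> k = (1, (l, snd u) # r)"
  by (auto simp: V_inv_def gen_def split: if_splits)

lemma valid_word_Cons_foreign:
  "valid_word M r \<Longrightarrow> s \<in> bcarr (M l) \<Longrightarrow> r = [] \<or> fst (hd r) \<noteq> l \<Longrightarrow> valid_word M ((l, s) # r)"
  by (auto simp: valid_word_Cons)

lemma V_inv_add:
  assumes r: "valid_word M r" "r = [] \<or> fst (hd r) \<noteq> l"
    and uv: "snd u \<in> bcarr (M l)" "snd v \<in> bcarr (M l)"
  shows "(\<lambda>k. V_inv l (fst u + fst v, badd (M l) (snd u) (snd v)) r k - V_inv l u r k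
     - V_inv l v r k) \<in> fp_rel M"
proof (rule fp_rel_sumI)
  show "(\<lambda>k. gen (fst u + fst v, r) k - gen (fst u, r) k - gen (fst v, r) k) \<in> fp_rel M"
    using fp_rel.rel_addb[OF r(1)] .
  show "(\<lambda>k. gen (1, (l, badd (M l) (snd u) (snd v)) # r) k - gen (1, (l, snd u) # r) k
      - gen (1, (l, snd v) # r) k) \<in> fp_rel M"
    using fp_rel.rel_addx[of M "[]" l "snd u" r "snd v" 1] valid_word_Cons_foreign[OF r(1) uv(1) r(2)] uv(2)
    by simp
qed (simp add: V_inv_def)

lemma V_inv_ract:
  assumes r: "valid_word M ((j, y) # r)" "j \<noteq> l" and u: "snd u \<in> bcarr (M l)"
  shows "(\<lambda>k. V_inv l (fst u * c, bract (M l) (snd u) c) ((j, y) # r) k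
     - V_inv l u ((j, blact (M j) c y) # r) k) \<in> fp_rel M"
proof (rule fp_rel_sumI)
  show "(\<lambda>k. gen (fst u * c, (j, y) # r) k - gen (fst u, (j, blact (M j) c y) # r) k) \<in> fp_rel M"
    using fp_rel.rel_first[OF r(1)] .
  show "(\<lambda>k. gen (1, (l, bract (M l) (snd u) c) # (j, y) # r) k
      - gen (1, (l, snd u) # (j, blact (M j) c y) # r) k) \<in> fp_rel M"
    using fp_rel.rel_bal[of M "[]" l "snd u" j y r 1 c] valid_word_Cons_foreign[OF r(1) u] r(2)
    by simp
qed (simp add: V_inv_def)

lemma V_inv_addx:
  assumes w: "valid_word M (w1 @ (i, x) # w2)" "fst (hd (w1 @ (i, x) # w2)) \<noteq> l"
    and y: "y \<in> bcarr (M i)" and u: "snd u \<in> bcarr (M l)"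
  shows "(\<lambda>k. V_inv l u (w1 @ (i, badd (M i) x y) # w2) k - V_inv l u (w1 @ (i, x) # w2) k
     - V_inv l u (w1 @ (i, y) # w2) k) \<in> fp_rel M"
proof (rule fp_rel_sumI)
  show "(\<lambda>k. gen (fst u, w1 @ (i, badd (M i) x y) # w2) k - gen (fst u, w1 @ (i, x) # w2) k
      - gen (fst u, w1 @ (i, y) # w2) k) \<in> fp_rel M"
    using fp_rel.rel_addx[OF w(1) y] .
  have "valid_word M (((l, snd u) # w1) @ (i, x) # w2)"
    using valid_word_Cons_foreign[OF w(1) u] w(2) by simp
  from fp_rel.rel_addx[OF this y, of 1]
  show "(\<lambda>k. gen (1, (l, snd u) # w1 @ (i, badd (M i) x y) # w2) k
      - gen (1, (l, snd u) # w1 @ (i, x) # w2) k - gen (1, (l, snd u) # w1 @ (i, y) # w2) k)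
      \<in> fp_rel M"
    by simp
qed (simp add: V_inv_def)

lemma V_inv_bal:
  assumes w: "valid_word M (w1 @ (i, x) # (j, y) # w2)" "fst (hd (w1 @ (i, x) # (j, y) # w2)) \<noteq> l"
    and u: "snd u \<in> bcarr (M l)"
  shows "(\<lambda>k. V_inv l u (w1 @ (i, bract (M i) x c) # (j, y) # w2) k
     - V_inv l u (w1 @ (i, x) # (j, blact (M j) c y) # w2) k) \<in> fp_rel M"
proof (rule fp_rel_sumI)
  show "(\<lambda>k. gen (fst u, w1 @ (i, bract (M i) x c) # (j, y) # w2) k
      - gen (fst u, w1 @ (i, x) # (j, blact (M j) c y) # w2) k) \<in> fp_rel M"
    using fp_rel.rel_bal[OF w(1)] .
  have "valid_word M (((l, snd u) # w1) @ (i, x) # (j, y) # w2)"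
    using valid_word_Cons_foreign[OF w(1) u] w(2) by simp
  from fp_rel.rel_bal[OF this, of 1 c]
  show "(\<lambda>k. gen (1, (l, snd u) # w1 @ (i, bract (M i) x c) # (j, y) # w2) k
      - gen (1, (l, snd u) # w1 @ (i, x) # (j, blact (M j) c y) # w2) k) \<in> fp_rel M"
    by simp
qed (simp add: V_inv_def)

definition lam_gen :: "('i \<Rightarrow> ('b::ring_1, 'x) bimod) \<Rightarrow> 'i \<Rightarrow> ('b \<times> 'x \<Rightarrow> 'b \<times> 'x)
    \<Rightarrow> ('b, 'i, 'x) fpgen \<Rightarrow> ('b, 'i, 'x) fpvec" where
  "lam_gen M l a = (\<lambda>(b, w).
     if w \<noteq> [] \<and> fst (hd w) = l then V_inv l (a (0, blact (M l) b (snd (hd w)))) (tl w)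
     else V_inv l (a (b, bzero (M l))) w)"

lemma lam_eq_lift: "lam M l a = lift M (lam_gen M l a)"
  unfolding lam_def lam_gen_def V_inv_def Let_def ..

lemma lam_gen_Cons_same: "lam_gen M l a (b, (l, x) # r) = V_inv l (a (0, blact (M l) b x)) r"
  by (simp add: lam_gen_def)

lemma lam_gen_other:
  "w = [] \<or> fst (hd w) \<noteq> l \<Longrightarrow> lam_gen M l a (b, w) = V_inv l (a (b, bzero (M l))) w"
  by (auto simp: lam_gen_def)

context
  fixes M :: "'i \<Rightarrow> ('b::ring_1, 'x) bimod" and l :: 'i and a :: "'b \<times> 'x \<Rightarrow> 'b \<times> 'x"
  assumes bimod: "bimodule (M l)" and a: "a \<in> Lcomp M l"
begin

private lemmas zero_closed = bimodule_zero_closed[OF bimod]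
private lemmas lact_closed = bimodule_lact_closed[OF bimod]

lemma lam_gen_addb:
  assumes w: "valid_word M w"
  shows "(\<lambda>k. lam_gen M l a (b1 + b2, w) k - lam_gen M l a (b1, w) k - lam_gen M l a (b2, w) k)
    \<in> fp_rel M"
proof (cases "w \<noteq> [] \<and> fst (hd w) = l")
  case True
  then obtain x r where w_eq: "w = (l, x) # r"
    by (cases w) auto
  have r: "valid_word M r" "r = [] \<or> fst (hd r) \<noteq> l" and x: "x \<in> bcarr (M l)"
    using w w_eq by (auto simp: valid_word_Cons)
  let ?s1 = "blact (M l) b1 x" and ?s2 = "blact (M l) b2 x"
  have "a (0, blact (M l) (b1 + b2) x) =
      (fst (a (0, ?s1)) + fst (a (0, ?s2)), badd (M l) (snd (a (0, ?s1))) (snd (a (0, ?s2))))"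
    using Lcomp_add[OF a lact_closed[OF x] lact_closed[OF x], of 0 0]
      bimodule_lact_scalar_add[OF bimod x] by simp
  then show ?thesis
    using V_inv_add[OF r Lcomp_closed[OF a lact_closed[OF x]] Lcomp_closed[OF a lact_closed[OF x]]]
    by (simp add: w_eq lam_gen_Cons_same)
next
  case False
  then have other: "w = [] \<or> fst (hd w) \<noteq> l"
    by auto
  have "a (b1 + b2, bzero (M l)) = (fst (a (b1, bzero (M l))) + fst (a (b2, bzero (M l))),
      badd (M l) (snd (a (b1, bzero (M l)))) (snd (a (b2, bzero (M l)))))"
    using Lcomp_add[OF a zero_closed zero_closed, of b1 b2] bimodule_zero_add[OF bimod zero_closed]
    by simp
  then show ?thesis
    using V_inv_add[OF w other Lcomp_closed[OF a zero_closed] Lcomp_closed[OF a zero_closed]]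
    by (simp add: lam_gen_other[OF other])
qed

lemma lam_gen_addx:
  assumes w: "valid_word M (w1 @ (i, x) # w2)" and y: "y \<in> bcarr (M i)"
  shows "(\<lambda>k. lam_gen M l a (b, w1 @ (i, badd (M i) x y) # w2) k
     - lam_gen M l a (b, w1 @ (i, x) # w2) k - lam_gen M l a (b, w1 @ (i, y) # w2) k) \<in> fp_rel M"
proof (cases "fst (hd (w1 @ (i, x) # w2)) = l")
  case False
  have "w1 @ (i, s) # w2 = [] \<or> fst (hd (w1 @ (i, s) # w2)) \<noteq> l" for s
    using False by (cases w1) auto
  then show ?thesis
    using V_inv_addx[OF w False y Lcomp_closed[OF a zero_closed]] by (simp add: lam_gen_other)
next
  case True
  show ?thesis
  proof (cases w1)
    case Nil
    with True have il: "i = l"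
      by simp
    have w2: "valid_word M w2" "w2 = [] \<or> fst (hd w2) \<noteq> l" and x: "x \<in> bcarr (M l)"
      using w Nil il by (auto simp: valid_word_Cons)
    have yl: "y \<in> bcarr (M l)"
      using y il by simp
    let ?s1 = "blact (M l) b x" and ?s2 = "blact (M l) b y"
    have "a (0, blact (M l) b (badd (M l) x y)) =
        (fst (a (0, ?s1)) + fst (a (0, ?s2)), badd (M l) (snd (a (0, ?s1))) (snd (a (0, ?s2))))"
      using Lcomp_add[OF a lact_closed[OF x] lact_closed[OF yl], of 0 0]
        bimodule_lact_add[OF bimod x yl] by simp
    then show ?thesis
      using V_inv_add[OF w2 Lcomp_closed[OF a lact_closed[OF x]] Lcomp_closed[OF a lact_closed[OF yl]]]
      by (simp add: Nil il lam_gen_Cons_same)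
  next
    case (Cons p w1')
    with True obtain x0 where p: "p = (l, x0)"
      by (cases p) auto
    have "valid_word M (w1' @ (i, x) # w2)" "fst (hd (w1' @ (i, x) # w2)) \<noteq> l"
      and x0: "x0 \<in> bcarr (M l)"
      using w unfolding Cons p by (auto simp: valid_word_Cons)
    from V_inv_addx[OF this(1,2) y Lcomp_closed[OF a lact_closed[OF x0]]]
    show ?thesis
      by (simp add: Cons p lam_gen_Cons_same)
  qed
qed

lemma lam_gen_bal:
  assumes w: "valid_word M (w1 @ (i, x) # (j, y) # w2)"
  shows "(\<lambda>k. lam_gen M l a (b, w1 @ (i, bract (M i) x c) # (j, y) # w2) k
     - lam_gen M l a (b, w1 @ (i, x) # (j, blact (M j) c y) # w2) k) \<in> fp_rel M"
proof (cases "fst (hd (w1 @ (i, x) # (j, y) # w2)) = l")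
  case False
  have "w1 @ (i, s) # (j, t) # w2 = [] \<or> fst (hd (w1 @ (i, s) # (j, t) # w2)) \<noteq> l" for s t
    using False by (cases w1) auto
  then show ?thesis
    using V_inv_bal[OF w False Lcomp_closed[OF a zero_closed]] by (simp add: lam_gen_other)
next
  case True
  show ?thesis
  proof (cases w1)
    case Nil
    with True have il: "i = l"
      by simp
    have r: "valid_word M ((j, y) # w2)" "j \<noteq> l" and x: "x \<in> bcarr (M l)"
      using w Nil il by (auto simp: valid_word_Cons)
    let ?s = "blact (M l) b x"
    have "a (0, blact (M l) b (bract (M l) x c)) = (fst (a (0, ?s)) * c, bract (M l) (snd (a (0, ?s))) c)"
      using Lcomp_ract[OF a lact_closed[OF x], of 0 c] bimodule_lact_ract[OF bimod x] by simp
    then show ?thesis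
      using V_inv_ract[OF r Lcomp_closed[OF a lact_closed[OF x, of b], of 0], of c]
      by (simp add: Nil il lam_gen_Cons_same)
  next
    case (Cons p w1')
    with True obtain x0 where p: "p = (l, x0)"
      by (cases p) auto
    have "valid_word M (w1' @ (i, x) # (j, y) # w2)" "fst (hd (w1' @ (i, x) # (j, y) # w2)) \<noteq> l"
      and x0: "x0 \<in> bcarr (M l)"
      using w unfolding Cons p by (auto simp: valid_word_Cons)
    from V_inv_bal[OF this(1,2) Lcomp_closed[OF a lact_closed[OF x0]]]
    show ?thesis
      by (simp add: Cons p lam_gen_Cons_same)
  qed
qed

lemma lam_gen_first:
  assumes w: "valid_word M ((i, x) # w)"
  shows "(\<lambda>k. lam_gen M l a (b * c, (i, x) # w) k - lam_gen M l a (b, (i, blact (M i) c x) # w) k)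
    \<in> fp_rel M"
proof (cases "i = l")
  case True
  with w have "x \<in> bcarr (M l)"
    by (simp add: valid_word_Cons)
  then show ?thesis
    by (simp add: True lam_gen_Cons_same bimodule_lact_mult[OF bimod] fp_rel.rel_zero)
next
  case False
  have "a (b * c, bzero (M l)) = (fst (a (b, bzero (M l))) * c, bract (M l) (snd (a (b, bzero (M l)))) c)"
    using Lcomp_ract[OF a zero_closed, of b c] bimodule_ract_zero[OF bimod] by simp
  then show ?thesis
    using V_inv_ract[OF w False Lcomp_closed[OF a zero_closed]] False by (simp add: lam_gen_other)
qed

lemma lam_gen_preserves_valid_word: "preserves (lam_gen M l a) (\<lambda>k. valid_word M (snd k))"
  unfolding preserves_def
proof (intro allI impI)
  fix k k' assume w: "valid_word M (snd k)" and nz: "lam_gen M l a k k' \<noteq> 0"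
  obtain b w where k: "k = (b, w)"
    by (cases k)
  show "valid_word M (snd k')"
  proof (cases "w \<noteq> [] \<and> fst (hd w) = l")
    case True
    then obtain x r where w_eq: "w = (l, x) # r"
      by (cases w) auto
    have r: "valid_word M r" "r = [] \<or> fst (hd r) \<noteq> l" and x: "x \<in> bcarr (M l)"
      using w k w_eq by (auto simp: valid_word_Cons)
    show ?thesis
      using V_inv_nonzeroD[OF nz[unfolded k w_eq lam_gen_Cons_same]] r
        valid_word_Cons_foreign[OF r(1) Lcomp_closed[OF a lact_closed[OF x]] r(2)] by auto
  next
    case False
    then have other: "w = [] \<or> fst (hd w) \<noteq> l"
      by auto
    have vw: "valid_word M w"
      using w k by simp
    show ?thesis
      using V_inv_nonzeroD[OF nz[unfolded k lam_gen_other[OF other]]] k vw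
        valid_word_Cons_foreign[OF vw Lcomp_closed[OF a zero_closed] other] by auto
  qed
qed

lemma lam_gen_descends: "descends M (lam_gen M l a)"
proof (rule descendsI)
  show "fin_supp (lam_gen M l a k)" for k
    by (cases k) (simp add: lam_gen_def)
qed (fact lam_gen_preserves_valid_word lam_gen_addb lam_gen_addx lam_gen_bal lam_gen_first)+

end

definition P_gen :: "('i \<Rightarrow> ('b::ring_1, 'x) bimod) \<Rightarrow> 'i \<Rightarrow> ('b, 'i, 'x) fpgen \<Rightarrow> ('b, 'i, 'x) fpvec" where
  "P_gen M l = (\<lambda>(b, w). if w = [] \<or> (\<exists>x. w = [(l, x)]) then gen (b, w) else (\<lambda>_. 0))"

lemma Pproj_eq_lift: "Pproj M l = lift M (P_gen M l)"
  unfolding Pproj_def P_gen_def ..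

lemma P_gen_descends: "descends M (P_gen M l)"
proof (rule descendsI)
  show "fin_supp (P_gen M l k)" for k
    by (cases k) (auto simp: P_gen_def)
  show "preserves (P_gen M l) (\<lambda>k. valid_word M (snd k))"
    by (auto simp: preserves_def P_gen_def gen_def split: if_splits)
  show "(\<lambda>k. P_gen M l (b1 + b2, w) k - P_gen M l (b1, w) k - P_gen M l (b2, w) k) \<in> fp_rel M"
    if "valid_word M w" for w b1 b2
    using fp_rel.rel_addb[OF that] by (auto simp: P_gen_def fp_rel.rel_zero)
  show "(\<lambda>k. P_gen M l (b, w1 @ (i, badd (M i) x y) # w2) k - P_gen M l (b, w1 @ (i, x) # w2) k
      - P_gen M l (b, w1 @ (i, y) # w2) k) \<in> fp_rel M"
    if "valid_word M (w1 @ (i, x) # w2)" "y \<in> bcarr (M i)" for w1 i x w2 y b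
    using fp_rel.rel_addx[OF that] by (cases w1) (auto simp: P_gen_def fp_rel.rel_zero)
  show "(\<lambda>k. P_gen M l (b, w1 @ (i, bract (M i) x c) # (j, y) # w2) k
      - P_gen M l (b, w1 @ (i, x) # (j, blact (M j) c y) # w2) k) \<in> fp_rel M" for w1 i x j y w2 b c
    by (cases w1) (auto simp: P_gen_def fp_rel.rel_zero)
  show "(\<lambda>k. P_gen M l (b * c, (i, x) # w) k - P_gen M l (b, (i, blact (M i) c x) # w) k) \<in> fp_rel M"
    if "valid_word M ((i, x) # w)" for i x w b c
    using fp_rel.rel_first[OF that] by (auto simp: P_gen_def fp_rel.rel_zero)
qed

text \<open>short_word l spans B \<oplus> X_l-ring, the range of P_l; on valid words,
  has_foreign_letter l holds exactly where P_l vanishes.\<close>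
definition short_word :: "'i \<Rightarrow> ('b, 'i, 'x) fpgen \<Rightarrow> bool" where
  "short_word l k \<longleftrightarrow> snd k = [] \<or> (\<exists>x. snd k = [(l, x)])"

definition has_foreign_letter :: "'i \<Rightarrow> ('b, 'i, 'x) fpgen \<Rightarrow> bool" where
  "has_foreign_letter l k \<longleftrightarrow> (\<exists>p\<in>set (snd k). fst p \<noteq> l)"

lemma supp_in_short_word_nonscalar:
  assumes "supp_in g (short_word j)" "i \<noteq> j"
  shows "supp_in (\<lambda>k. if snd k \<noteq> [] then g k else 0) (has_foreign_letter i)"
  using assms by (fastforce simp: supp_in_def short_word_def has_foreign_letter_def)

lemma lam_gen_preserves_short_word: "preserves (lam_gen M l a) (short_word l)"
  unfolding preserves_def short_word_def
proof (intro allI impI)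
  fix k k' assume short: "snd k = [] \<or> (\<exists>x. snd k = [(l, x)])" and nz: "lam_gen M l a k k' \<noteq> 0"
  obtain b w where k: "k = (b, w)"
    by (cases k)
  show "snd k' = [] \<or> (\<exists>x. snd k' = [(l, x)])"
  proof (cases "w = []")
    case True
    then show ?thesis
      using V_inv_nonzeroD[OF nz[unfolded k True lam_gen_other[of "[]", simplified]]] by auto
  next
    case False
    with short k obtain x where w: "w = [(l, x)]"
      by auto
    show ?thesis
      using V_inv_nonzeroD[OF nz[unfolded k w lam_gen_Cons_same]] by auto
  qed
qed

lemma lam_gen_preserves_has_foreign_letter: "preserves (lam_gen M l a) (has_foreign_letter l)"
  unfolding preserves_def
proof (intro allI impI)
  fix k k' assume foreign: "has_foreign_letter l k" and nz: "lam_gen M l a k k' \<noteq> 0"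
  obtain b w where k: "k = (b, w)"
    by (cases k)
  show "has_foreign_letter l k'"
  proof (cases "w \<noteq> [] \<and> fst (hd w) = l")
    case True
    then obtain x r where w: "w = (l, x) # r"
      by (cases w) auto
    show ?thesis
      using V_inv_nonzeroD[OF nz[unfolded k w lam_gen_Cons_same]] foreign k w
      by (auto simp: has_foreign_letter_def)
  next
    case False
    then have other: "w = [] \<or> fst (hd w) \<noteq> l"
      by auto
    show ?thesis
      using V_inv_nonzeroD[OF nz[unfolded k lam_gen_other[OF other]]] foreign k
      by (auto simp: has_foreign_letter_def)
  qed
qed

lemma P_gen_preserves_short_word: "preserves (P_gen M l) (short_word l)"
  unfolding preserves_def short_word_def by (auto simp: P_gen_def gen_def split: if_splits)

lemma ext_P_gen_has_foreign_letter:
  assumes "supp_in h (has_foreign_letter l)"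
  shows "ext (P_gen M l) h = (\<lambda>_. 0)"
proof -
  have "P_gen M l k = (\<lambda>_. 0)" if "h k \<noteq> 0" for k
    using assms that by (cases k) (fastforce simp: supp_in_def has_foreign_letter_def P_gen_def)
  then show ?thesis
    unfolding ext_def by (auto intro!: sum.neutral)
qed

definition scalar_coeff :: "('b::ring_1, 'i, 'x) fpgen \<Rightarrow> 'b" where
  "scalar_coeff k = (if snd k = [] then fst k else 0)"

definition scalar_part :: "('b, 'i, 'x) fpvec \<Rightarrow> ('b, 'i, 'x) fpvec" where
  "scalar_part g = (\<lambda>k. if snd k = [] then g k else 0)"

lemma fp_proj_eq_supp_sum:
  assumes "fin_supp (rep M C)"
  shows "fp_proj M C = supp_sum scalar_coeff (rep M C)"
  using assms unfolding fp_proj_def supp_sum_def scalar_coeff_def fin_supp_def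
  by (intro sum.mono_neutral_cong_left) auto

lemma supp_sum_scalar_coeff_rel: "r \<in> fp_rel M \<Longrightarrow> supp_sum scalar_coeff r = 0"
proof (induction rule: fp_rel.induct)
  case (rel_plus g h)
  then show ?case
    by (simp add: supp_sum_add fp_rel_fin_supp)
next
  case (rel_neg g)
  then show ?case
    by (simp add: supp_sum_neg fp_rel_fin_supp)
qed (simp_all add: supp_sum_diff scalar_coeff_def)

lemma fp_proj_cls:
  assumes g: "g \<in> fp_free M"
  shows "fp_proj M (cls M g) = supp_sum scalar_coeff g"
proof -
  let ?g = "rep M (cls M g)"
  have "(\<lambda>k. ?g k - g k) \<in> fp_rel M"
    using rep_cls[OF g] cls_eq_iff by blast
  moreover have "fin_supp ?g" "fin_supp g"
    using rep_cls(1)[OF g] g by (simp_all add: fp_free_iff)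
  ultimately show ?thesis
    using supp_sum_scalar_coeff_rel by (force simp: fp_proj_eq_supp_sum supp_sum_diff)
qed

lemma supp_sum_scalar_coeff:
  assumes "fin_supp g"
  shows "supp_sum scalar_coeff g = supp_sum fst (scalar_part g)"
proof -
  have "finite {k. g k \<noteq> 0}"
    using assms by (simp add: fin_supp_def)
  then show ?thesis
    by (subst (1 2) supp_sum_superset[of "{k. g k \<noteq> 0}"])
      (auto simp: scalar_coeff_def scalar_part_def intro: sum.cong)
qed

lemma gen_Nil_int_multiple: "(\<lambda>k. n * gen (b, []) k - gen (of_int n * b, []) k) \<in> fp_rel M"
proof (induction n rule: int_induct[where k = 0])
  case base
  then show ?case
    using fp_rel.rel_addb[of M "[]" 0 0] by simp
next
  case (step1 n)
  have "(\<lambda>k. gen (of_int n * b + b, []) k - gen (of_int n * b, []) k - gen (b, []) k) \<in> fp_rel M"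
    using fp_rel.rel_addb[of M "[]"] by simp
  from fp_rel_diff[OF step1(2) this] show ?case
    by (simp add: algebra_simps)
next
  case (step2 n)
  have "(\<lambda>k. gen (of_int (n - 1) * b + b, []) k - gen (of_int (n - 1) * b, []) k - gen (b, []) k)
      \<in> fp_rel M"
    using fp_rel.rel_addb[of M "[]"] by simp
  from fp_rel.rel_plus[OF step2(2) this] show ?case
    by (simp add: algebra_simps)
qed

lemma gen_Nil_sum:
  "finite F \<Longrightarrow> \<forall>k\<in>F. snd k = [] \<Longrightarrow>
   (\<lambda>k'. (\<Sum>k\<in>F. n k * gen k k') - gen (\<Sum>k\<in>F. of_int (n k) * fst k, []) k') \<in> fp_rel M"
proof (induction F rule: finite_induct)
  case empty
  then show ?case
    using fp_rel.rel_addb[of M "[]" 0 0] by simp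
next
  case (insert k F)
  obtain b where k: "k = (b, [])"
    using insert.prems by (cases k) auto
  let ?c = "\<Sum>k\<in>F. of_int (n k) * fst k"
  have "(\<lambda>k'. (\<Sum>k\<in>F. n k * gen k k') - gen (?c, []) k' + (n k * gen (b, []) k' - gen (of_int (n k) * b, []) k'))
      \<in> fp_rel M"
    using insert fp_rel.rel_plus[OF _ gen_Nil_int_multiple] by auto
  moreover have "(\<lambda>k'. gen (?c + of_int (n k) * b, []) k' - gen (?c, []) k' - gen (of_int (n k) * b, []) k')
      \<in> fp_rel M"
    using fp_rel.rel_addb[of M "[]"] by simp
  ultimately have "(\<lambda>k'. (\<Sum>k\<in>F. n k * gen k k') - gen (?c, []) k' + (n k * gen (b, []) k' - gen (of_int (n k) * b, []) k')
      - (gen (?c + of_int (n k) * b, []) k' - gen (?c, []) k' - gen (of_int (n k) * b, []) k')) \<in> fp_rel M"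
    by (rule fp_rel_diff)
  then show ?case
    using insert.hyps k by (simp add: algebra_simps)
qed

lemma cls_scalar_supported:
  assumes "fin_supp g" "supp_in g (\<lambda>k. snd k = [])"
  shows "cls M g = fp_emb M (supp_sum fst g)"
proof -
  have fin: "finite {k. g k \<noteq> 0}"
    using assms(1) by (simp add: fin_supp_def)
  have decomp: "(\<Sum>k\<in>{k. g k \<noteq> 0}. g k * gen k k') = g k'" for k'
  proof -
    have "(\<Sum>k\<in>{k. g k \<noteq> 0}. g k * gen k k') = (\<Sum>k\<in>{k. g k \<noteq> 0}. if k = k' then g k else 0)"
      by (rule sum.cong) (auto simp: gen_def)
    then show ?thesis
      using fin by (simp add: sum.delta')
  qed
  have "(\<lambda>k'. (\<Sum>k\<in>{k. g k \<noteq> 0}. g k * gen k k') - gen (supp_sum fst g, []) k') \<in> fp_rel M"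
    unfolding supp_sum_def by (rule gen_Nil_sum[OF fin]) (use assms(2) in \<open>simp add: supp_in_def\<close>)
  then show ?thesis
    unfolding fp_emb_def cls_eq_iff decomp .
qed

lemma fp_emb_fp_proj_cls:
  assumes g: "g \<in> fp_free M"
  shows "fp_emb M (fp_proj M (cls M g)) = cls M (scalar_part g)"
proof -
  have "fin_supp g"
    using g by (simp add: fp_free_iff)
  moreover from this have "fin_supp (scalar_part g)"
    unfolding fin_supp_def scalar_part_def by (rule rev_finite_subset) auto
  ultimately show ?thesis
    by (simp add: fp_proj_cls[OF g] supp_sum_scalar_coeff cls_scalar_supported supp_in_def scalar_part_def)
qed

section \<open>Products of operators from A_l\<close>

lemma prodop_Nil [simp]: "prodop [] = id"
  by (simp add: prodop_def)

lemma prodop_Cons [simp]: "prodop (T # Ts) = T \<circ> prodop Ts"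
  by (simp add: prodop_def)

definition acts_as :: "('i \<Rightarrow> ('b::ring_1, 'x) bimod) \<Rightarrow> 'i
    \<Rightarrow> (('b, 'i, 'x) fpvec \<Rightarrow> ('b, 'i, 'x) fpvec) \<Rightarrow> (('b, 'i, 'x) fpelt \<Rightarrow> ('b, 'i, 'x) fpelt) \<Rightarrow> bool" where
  "acts_as M l F T \<longleftrightarrow> (\<forall>g\<in>fp_free M.
     F g \<in> fp_free M \<and> T (cls M g) = cls M (F g) \<and>
     (\<forall>h\<in>fp_free M. F (\<lambda>k. g k + h k) = (\<lambda>k. F g k + F h k)) \<and>
     (supp_in g (short_word l) \<longrightarrow> supp_in (F g) (short_word l)) \<and>
     (supp_in g (has_foreign_letter l) \<longrightarrow> supp_in (F g) (has_foreign_letter l)))"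

definition kills_foreign :: "('i \<Rightarrow> ('b::ring_1, 'x) bimod) \<Rightarrow> 'i \<Rightarrow> (('b, 'i, 'x) fpvec \<Rightarrow> ('b, 'i, 'x) fpvec) \<Rightarrow> bool" where
  "kills_foreign M l F \<longleftrightarrow> (\<forall>h\<in>fp_free M. supp_in h (has_foreign_letter l) \<longrightarrow> F h = (\<lambda>_. 0))"

lemma acts_asD:
  assumes "acts_as M l F T" "g \<in> fp_free M"
  shows acts_as_fp_free: "F g \<in> fp_free M"
    and acts_as_cls: "T (cls M g) = cls M (F g)"
    and acts_as_add: "h \<in> fp_free M \<Longrightarrow> F (\<lambda>k. g k + h k) = (\<lambda>k. F g k + F h k)"
    and acts_as_short_word: "supp_in g (short_word l) \<Longrightarrow> supp_in (F g) (short_word l)"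
    and acts_as_has_foreign_letter:
      "supp_in g (has_foreign_letter l) \<Longrightarrow> supp_in (F g) (has_foreign_letter l)"
  using assms unfolding acts_as_def by blast+

lemma acts_as_id: "acts_as M l id id"
  by (simp add: acts_as_def)

lemma acts_as_comp:
  assumes F: "acts_as M l F T" and G: "acts_as M l G U"
  shows "acts_as M l (F \<circ> G) (T \<circ> U)"
  unfolding acts_as_def
proof (intro ballI conjI impI)
  fix g assume g: "g \<in> fp_free M"
  have Gg: "G g \<in> fp_free M"
    using G g by (simp add: acts_as_def)
  show "(F \<circ> G) g \<in> fp_free M" "(T \<circ> U) (cls M g) = cls M ((F \<circ> G) g)"
    using F G g Gg by (simp_all add: acts_as_def)
  show "(F \<circ> G) (\<lambda>k. g k + h k) = (\<lambda>k. (F \<circ> G) g k + (F \<circ> G) h k)" if h: "h \<in> fp_free M" for h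
  proof -
    have "G h \<in> fp_free M" "G (\<lambda>k. g k + h k) = (\<lambda>k. G g k + G h k)"
      using G g h by (simp_all add: acts_as_def)
    then show ?thesis
      using F Gg by (simp add: acts_as_def)
  qed
  show "supp_in ((F \<circ> G) g) (short_word l)" if "supp_in g (short_word l)"
    using F G g Gg that by (simp add: acts_as_def)
  show "supp_in ((F \<circ> G) g) (has_foreign_letter l)" if "supp_in g (has_foreign_letter l)"
    using F G g Gg that by (simp add: acts_as_def)
qed

lemma kills_foreign_comp:
  assumes "acts_as M l F T" "acts_as M l G U" "kills_foreign M l F \<or> kills_foreign M l G"
  shows "kills_foreign M l (F \<circ> G)"
  unfolding kills_foreign_def
proof (intro ballI impI)
  fix h assume h: "h \<in> fp_free M" "supp_in h (has_foreign_letter l)"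
  have zero: "(\<lambda>_. 0) \<in> fp_free M"
    by (simp add: fp_free_iff supp_in_def)
  have "F (\<lambda>_. 0) k = F (\<lambda>_. 0) k + F (\<lambda>_. 0) k" for k
    using fun_cong[OF acts_as_add[OF assms(1) zero zero], of k] unfolding add_0_left .
  then have F0: "F (\<lambda>_. 0) = (\<lambda>_. 0)"
    by (simp only: add_cancel_right_right) blast
  have "G h \<in> fp_free M" "supp_in (G h) (has_foreign_letter l)"
    using acts_as_fp_free[OF assms(2) h(1)] acts_as_has_foreign_letter[OF assms(2) h] .
  then show "(F \<circ> G) h = (\<lambda>_. 0)"
    using assms(3) h F0 unfolding kills_foreign_def comp_def by metis
qed

lemma lift_acts_as:
  assumes "descends M \<phi>" "preserves \<phi> (short_word l)" "preserves \<phi> (has_foreign_letter l)"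
  shows "acts_as M l (ext \<phi>) (lift M \<phi>)"
  unfolding acts_as_def
proof (intro ballI conjI impI)
  fix g assume g: "g \<in> fp_free M"
  show "ext \<phi> g \<in> fp_free M" "lift M \<phi> (cls M g) = cls M (ext \<phi> g)"
    using descends_fp_free[OF assms(1) g] lift_cls[OF assms(1) g] .
  show "ext \<phi> (\<lambda>k. g k + h k) = (\<lambda>k. ext \<phi> g k + ext \<phi> h k)" if "h \<in> fp_free M" for h
    using g that by (simp add: ext_add fp_free_iff)
qed (use assms(2,3) supp_in_ext in blast)+

lemma Pproj_acts_as: "acts_as M l (ext (P_gen M l)) (Pproj M l)"
proof -
  have "preserves (P_gen M l) (has_foreign_letter l)"
    by (auto simp: preserves_def has_foreign_letter_def P_gen_def gen_def split: if_splits)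
  then show ?thesis
    unfolding Pproj_eq_lift by (intro lift_acts_as P_gen_descends P_gen_preserves_short_word)
qed

lemma Pproj_kills_foreign: "kills_foreign M l (ext (P_gen M l))"
  by (simp add: kills_foreign_def ext_P_gen_has_foreign_letter)

lemma lam_acts_as: "bimodule (M l) \<Longrightarrow> a \<in> Lcomp M l \<Longrightarrow> acts_as M l (ext (lam_gen M l a)) (lam M l a)"
  unfolding lam_eq_lift
  by (intro lift_acts_as lam_gen_descends lam_gen_preserves_short_word lam_gen_preserves_has_foreign_letter)

lemma AF_acts_as:
  assumes "bimodule (M l)" "T \<in> AF M l"
  obtains F where "acts_as M l F T"
proof -
  from assms(2) obtain a where "a \<in> Lcomp M l" "T = lam M l a"
    by (auto simp: AF_def)
  then show thesis
    using that lam_acts_as[of M l a] assms(1) by blast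
qed

lemma AB_acts_as:
  assumes "bimodule (M l)" "T \<in> AB M l"
  obtains F where "acts_as M l F T" "kills_foreign M l F"
proof -
  from assms obtain a where a: "a \<in> Lcomp M l" and T: "T = Pproj M l \<circ> (lam M l a \<circ> Pproj M l)"
    by (auto simp: AB_def comp_assoc)
  let ?P = "ext (P_gen M l)" and ?L = "ext (lam_gen M l a)"
  have inner: "acts_as M l (?L \<circ> ?P) (lam M l a \<circ> Pproj M l)"
    by (rule acts_as_comp[OF lam_acts_as[of M l, OF assms(1) a] Pproj_acts_as])
  have "acts_as M l (?P \<circ> (?L \<circ> ?P)) T"
    unfolding T by (rule acts_as_comp[OF Pproj_acts_as inner])
  moreover have "kills_foreign M l (?P \<circ> (?L \<circ> ?P))"
    by (rule kills_foreign_comp[OF Pproj_acts_as inner]) (simp add: Pproj_kills_foreign)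
  ultimately show thesis
    by (rule that)
qed

lemma prodop_acts_as:
  assumes "bimodule (M l)" "set Ts \<subseteq> AF M l \<union> AB M l"
  obtains F where "acts_as M l F (prodop Ts)" "(\<exists>T\<in>set Ts. T \<in> AB M l) \<Longrightarrow> kills_foreign M l F"
  using assms(2)
proof (induction Ts arbitrary: thesis)
  case Nil
  show ?case
    using Nil.prems(1) acts_as_id by fastforce
next
  case (Cons T Ts)
  obtain G where G: "acts_as M l G (prodop Ts)" "(\<exists>T\<in>set Ts. T \<in> AB M l) \<Longrightarrow> kills_foreign M l G"
    using Cons.IH Cons.prems(2) by auto
  have T: "T \<in> AF M l \<union> AB M l"
    using Cons.prems(2) by simp
  show ?case
  proof (cases "T \<in> AB M l")
    case True
    then obtain F where F: "acts_as M l F T" "kills_foreign M l F"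
      using AB_acts_as[of M l, OF assms(1)] by blast
    show ?thesis
    proof (rule Cons.prems(1))
      show "acts_as M l (F \<circ> G) (prodop (T # Ts))"
        using acts_as_comp[OF F(1) G(1)] by simp
      show "kills_foreign M l (F \<circ> G)"
        using F(2) kills_foreign_comp[OF F(1) G(1)] by blast
    qed
  next
    case False
    with T obtain F where F: "acts_as M l F T"
      using AF_acts_as[of M l, OF assms(1)] by blast
    show ?thesis
    proof (rule Cons.prems(1))
      show "acts_as M l (F \<circ> G) (prodop (T # Ts))"
        using acts_as_comp[OF F G(1)] by simp
      show "kills_foreign M l (F \<circ> G)" if "\<exists>T'\<in>set (T # Ts). T' \<in> AB M l"
        using that False G(2) kills_foreign_comp[OF F G(1)] by auto
    qed
  qed
qed

lemma kills_foreign_cls_eq_scalar_part: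
  assumes F: "acts_as M i F T" "kills_foreign M i F"
    and g: "g \<in> fp_free M" "supp_in g (short_word j)" and "i \<noteq> j"
  shows "T (cls M g) = T (fp_emb M (fp_proj M (cls M g)))"
proof -
  define h where "h = (\<lambda>k. if snd k \<noteq> [] then g k else 0)"
  have parts: "scalar_part g \<in> fp_free M" "h \<in> fp_free M"
    using g(1) unfolding scalar_part_def h_def by (simp_all add: fp_free_restrict)
  have split: "g = (\<lambda>k. scalar_part g k + h k)"
    by (rule ext) (simp add: scalar_part_def h_def)
  have "supp_in h (has_foreign_letter i)"
    unfolding h_def using g(2) \<open>i \<noteq> j\<close> by (rule supp_in_short_word_nonscalar)
  then have "F h = (\<lambda>_. 0)"
    using F(2) parts(2) by (simp add: kills_foreign_def)
  then have "F g = F (scalar_part g)"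
    using acts_as_add[OF F(1) parts] by (subst split) simp
  then show ?thesis
    by (simp add: acts_as_cls[OF F(1) g(1)] acts_as_cls[OF F(1) parts(1)] fp_emb_fp_proj_cls[OF g(1)])
qed

theorem lemma6p3:
  fixes M :: "'i \<Rightarrow> ('b::cplx_algebra_1, 'x) bimod"
    and S :: "'i \<Rightarrow> (('b, 'i, 'x) fpelt \<Rightarrow> ('b, 'i, 'x) fpelt) set"
    and i j :: 'i
    and as bs :: "(('b, 'i, 'x) fpelt \<Rightarrow> ('b, 'i, 'x) fpelt) list"
  assumes "\<forall>l. bimodule (M l)"
    and "\<forall>l. S l \<subseteq> AF M l \<union> AB M l"
    and "i \<noteq> j"
    and "as \<noteq> []" and "set as \<subseteq> S i"
    and "bs \<noteq> []" and "set bs \<subseteq> S j"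
    and "\<exists>a\<in>set as. a \<in> S i \<inter> AB M i"
  shows "prodop as (prodop bs (fp_one M)) = prodop as (fp_emb M (fp_E M (prodop bs)))"
proof -
  have bs_sub: "set bs \<subseteq> AF M j \<union> AB M j" and as_sub: "set as \<subseteq> AF M i \<union> AB M i"
    using assms(2,5,7) by blast+
  obtain G where G: "acts_as M j G (prodop bs)"
    using prodop_acts_as[of M j, OF _ bs_sub] assms(1) by metis
  have "\<exists>T\<in>set as. T \<in> AB M i"
    using assms(8) by blast
  then obtain F where F: "acts_as M i F (prodop as)" "kills_foreign M i F"
    using prodop_acts_as[of M i, OF _ as_sub] assms(1) by metis
  have one: "gen (1, []) \<in> fp_free M" "supp_in (gen (1, [])) (short_word j)"
    by (simp_all add: fp_free_iff supp_in_def short_word_def) (simp_all add: gen_def)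
  let ?g = "G (gen (1, []))"
  have "prodop bs (fp_one M) = cls M ?g"
    using acts_as_cls[OF G one(1)] by (simp add: fp_one_def fp_emb_def)
  moreover have "prodop as (cls M ?g) = prodop as (fp_emb M (fp_proj M (cls M ?g)))"
    using kills_foreign_cls_eq_scalar_part[OF F acts_as_fp_free[OF G one(1)]
        acts_as_short_word[OF G one] assms(3)] .
  ultimately show ?thesis
    by (simp add: fp_E_def)
qed

end
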